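(* Let $x_1,\dots,x_N$ be training data points, let $f(x,\theta)$ be a loss function differentiable in the parameter $\theta$, and fix the current parameter $\theta_t$. Let $S_b \subseteq \{x_1,\dots,x_N\}$ be a random bucket (the set of data points sharing the query's hash value in the hash table probed), and, conditionally on $S_b$, let $x_m$ be an element chosen uniformly at random from $S_b$. For each $i$, let $p_i>0$ denote the probability that $x_i$ belongs to $S_b$. Define $$\mathrm{Est} = \frac{1}{N}\sum_{i=1}^N \mathbb{1}_{x_i\in S_b}\,\mathbb{1}_{(x_i = x_m \mid x_i\in S_b)}\,\frac{\nabla f(x_i,\theta_t)\cdot |S_b|}{p_i}.$$ Then $\mathrm{Est}$ is an unbiased estimator of the full gradient: $$\mathbb{E}[\mathrm{Est}] = \frac{1}{N}\sum_{i=1}^N \nabla f(x_i,\theta_t).$$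
   Context: This is the LSH-sampled gradient estimator (LGD). Data points are preprocessed into locality-sensitive hash tables; at iteration $t$ the query (built from $\theta_t$) is hashed, a hash table is probed, and the matching non-empty bucket is $S_b$. The paper writes the bucket-membership probability as $p_i = cp(x_i,\theta_t)^K\,(1-cp(x_i,\theta_t)^K)^{l-1}$, where $cp(x,\theta)=\Pr(h(x)=h(\theta))$ is the collision probability of the LSH function $h$, $K$ is the number of concatenated hash functions per table, and $l$ is the number of tables probed until a non-empty bucket was found; in the statement $p_i$ simply denotes $\Pr(x_i\in S_b)$. $\mathbb{1}_{(x_i = x_m\mid x_i\in S_b)}$ is the indicator that $x_i$ is the element selected from the bucket. *)

theory Defs
  imports "HOL-Analysis.Analysis" "HOL-Probability.Probability"
begin

definition grad :: "('p::real_inner \<Rightarrow> real) \<Rightarrow> 'p \<Rightarrow> 'p" where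
  "grad g th = (THE D. GDERIV g th :> D)"

definition bucket_sample :: "nat set pmf \<Rightarrow> (nat set \<times> nat) pmf" where
  "bucket_sample B = bind_pmf B (\<lambda>S. map_pmf (\<lambda>m. (S, m)) (pmf_of_set S))"

definition lgd_est ::
  "nat \<Rightarrow> ('x \<Rightarrow> 'p::real_inner \<Rightarrow> real) \<Rightarrow> (nat \<Rightarrow> 'x) \<Rightarrow> 'p \<Rightarrow> (nat \<Rightarrow> real) \<Rightarrow> nat set \<times> nat \<Rightarrow> 'p" where
  "lgd_est N f x th p Sm =
     (1 / real N) *\<^sub>R (\<Sum>i=1..N. (indicator (fst Sm) i * (if i = snd Sm then 1 else 0)
        * real (card (fst Sm)) / p i) *\<^sub>R grad (f (x i)) th)"

end

theory Submission imports Defs begin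

text \<open>Given the bucket S, the uniform choice of m makes |S| times the indicator of m = i average to the
  indicator of i \<in> S; averaging over the bucket then gives Pr(i \<in> S) = p i. So each summand of the
  estimator has expectation (1/N) \<nabla>f(x_i, \<theta>), and linearity of expectation finishes the proof.\<close>

lemma expectation_pmf_of_set_selected_card:
  assumes "finite S" "S \<noteq> {}"
  shows "measure_pmf.expectation (pmf_of_set S)
           (\<lambda>m. indicator S i * (if i = m then 1 else 0) * real (card S)) = indicator S i"
  using assms by (simp add: integral_pmf_of_set indicator_def sum.delta)

lemma expectation_bucket_sample_selected_card:
  assumes buckets: "\<And>S. S \<in> set_pmf B \<Longrightarrow> finite S \<and> S \<noteq> {}"
  shows "measure_pmf.expectation (bucket_sample B)
           (\<lambda>Sm. indicator (fst Sm) i * (if i = snd Sm then 1 else 0) * real (card (fst Sm)))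
         = measure_pmf.prob B {S. i \<in> S}"
proof -
  define h :: "nat set \<times> nat \<Rightarrow> real"
    where "h = (\<lambda>Sm. indicator (fst Sm) i * (if i = snd Sm then 1 else 0) * real (card (fst Sm)))"
  have inner: "(\<integral>\<^sup>+m. ennreal (h (S, m)) \<partial>pmf_of_set S) = indicator {S. i \<in> S} S"
    if "S \<in> set_pmf B" for S
  proof -
    have "finite S" "S \<noteq> {}" using buckets[OF that] by auto
    then have "(\<integral>\<^sup>+m. ennreal (h (S, m)) \<partial>pmf_of_set S)
        = ennreal (measure_pmf.expectation (pmf_of_set S) (\<lambda>m. h (S, m)))"
      by (intro nn_integral_eq_integral) (auto simp: h_def integrable_measure_pmf_finite)
    also have "\<dots> = ennreal (indicator S i)"
      using \<open>finite S\<close> \<open>S \<noteq> {}\<close>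
      unfolding h_def fst_conv snd_conv by (subst expectation_pmf_of_set_selected_card) auto
    finally show ?thesis by (simp add: indicator_def)
  qed
  \<comment> \<open>h \<ge> 0, so computing through the nonnegative integral needs no bound on the bucket sizes.\<close>
  have "measure_pmf.expectation (bucket_sample B) h
      = enn2real (\<integral>\<^sup>+Sm. ennreal (h Sm) \<partial>bucket_sample B)"
    by (rule integral_eq_nn_integral) (auto simp: h_def)
  also have "\<dots> = enn2real (\<integral>\<^sup>+S. (\<integral>\<^sup>+m. ennreal (h (S, m)) \<partial>pmf_of_set S) \<partial>B)"
    by (simp add: bucket_sample_def)
  also have "\<dots> = enn2real (\<integral>\<^sup>+S. indicator {S. i \<in> S} S \<partial>B)"
    by (intro arg_cong[where f = enn2real] nn_integral_cong_AE) (simp add: AE_measure_pmf_iff inner)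
  also have "\<dots> = measure_pmf.prob B {S. i \<in> S}"
    by (simp add: measure_pmf.emeasure_eq_measure)
  finally show ?thesis unfolding h_def .
qed

theorem theorem1:
  fixes N :: nat
    and x :: "nat \<Rightarrow> 'x"
    and f :: "'x \<Rightarrow> 'p::euclidean_space \<Rightarrow> real"
    and th :: 'p
    and B :: "nat set pmf"
    and p :: "nat \<Rightarrow> real"
  assumes diff: "\<And>i. i \<in> {1..N} \<Longrightarrow> f (x i) differentiable (at th)"
    and bucket: "\<And>S. S \<in> set_pmf B \<Longrightarrow> S \<subseteq> {1..N} \<and> S \<noteq> {}"
    and p_def: "\<And>i. i \<in> {1..N} \<Longrightarrow> p i = measure_pmf.prob B {S. i \<in> S}"
    and p_pos: "\<And>i. i \<in> {1..N} \<Longrightarrow> p i > 0"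
  shows "measure_pmf.expectation (bucket_sample B) (lgd_est N f x th p)
           = (1 / real N) *\<^sub>R (\<Sum>i=1..N. grad (f (x i)) th)"
proof -
  have buckets: "\<And>S. S \<in> set_pmf B \<Longrightarrow> finite S \<and> S \<noteq> {}"
    using bucket finite_subset by blast
  have "set_pmf (bucket_sample B) \<subseteq> Pow {1..N} \<times> {1..N}"
    using bucket buckets by (fastforce simp: bucket_sample_def)
  then have "finite (set_pmf (bucket_sample B))"
    by (rule finite_subset) simp
  note integrable = integrable_measure_pmf_finite[OF this]
  have weight: "measure_pmf.expectation (bucket_sample B)
      (\<lambda>Sm. indicator (fst Sm) i * (if i = snd Sm then 1 else 0) * real (card (fst Sm)) / p i) = 1"
    if "i \<in> {1..N}" for i
    using p_def[OF that] p_pos[OF that]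
    by (simp add: expectation_bucket_sample_selected_card[OF buckets])
  have "measure_pmf.expectation (bucket_sample B) (lgd_est N f x th p)
      = (1 / real N) *\<^sub>R (\<Sum>i=1..N. measure_pmf.expectation (bucket_sample B)
          (\<lambda>Sm. indicator (fst Sm) i * (if i = snd Sm then 1 else 0) * real (card (fst Sm)) / p i)
          *\<^sub>R grad (f (x i)) th)"
    unfolding lgd_est_def by (simp add: integrable)
  also have "\<dots> = (1 / real N) *\<^sub>R (\<Sum>i=1..N. grad (f (x i)) th)"
    by (intro arg_cong[where f = "scaleR (1 / real N)"] sum.cong refl) (simp only: weight scaleR_one)
  finally show ?thesis .
qed

end
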